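(* Let $f\colon\mathbb{R}^n\to\mathbb{R}$ be differentiable, $L>0$, $0<t\le1$, and $\{\theta_k\}_{k=0}^\infty$ a positive sequence. Given $x_0$, define sequence (I) by $y_0=z_0=x_0$ and for $k\ge0$ \[ y_{k+1}=x_k-\tfrac1L\nabla f(x_k),\quad z_{k+1}=z_k-\tfrac{2t\theta_k}{L}\nabla f(x_k),\quad x_{k+1}=\Big(1-\tfrac1{\theta_{k+1}}\Big)y_{k+1}+\tfrac1{\theta_{k+1}}z_{k+1}, \] and sequence (II) by $y_0'=x_0'=x_0$ and for $k\ge0$ \[ y'_{k+1}=x'_k-\tfrac1L\nabla f(x'_k),\quad x'_{k+1}=y'_{k+1}+\frac{\theta_k-1}{\theta_{k+1}}(y'_{k+1}-y'_k)+(2t-1)\frac{\theta_k}{\theta_{k+1}}(y'_{k+1}-x'_k). \] Then $x_k=x'_k$ and $y_k=y'_k$ for all $k\ge0$. *)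

theory Defs
  imports "HOL-Analysis.Analysis"
begin

end

theory Submission
  imports Defs
begin

text \<open>Since \<open>x\<^sub>k\<close> is the convex combination of \<open>y\<^sub>k\<close> and \<open>z\<^sub>k\<close> with weight \<open>1/\<theta>\<^sub>k\<close> on \<open>z\<^sub>k\<close>
  (also for \<open>k = 0\<close>, where all three start at \<open>x\<^sub>0\<close>), the auxiliary sequence can be eliminated:
  \<open>z\<^sub>k = \<theta>\<^sub>k x\<^sub>k - (\<theta>\<^sub>k - 1) y\<^sub>k\<close>. The gradient step gives \<open>\<nabla>f(x\<^sub>k)/L = x\<^sub>k - y(k+1)\<close>, so the
  update of \<open>z\<close> becomes a momentum term, and substituting both into the update of \<open>x\<close>
  yields exactly the recursion of scheme (II). Two sequences obeying the same recursion
  from the same start coincide.\<close>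

lemma scaleR_eq_of_convex_combination:
  fixes a b c :: "'a::real_vector"
  assumes "\<theta> \<noteq> 0" "a = (1 - 1 / \<theta>) *\<^sub>R b + (1 / \<theta>) *\<^sub>R c"
  shows "c = \<theta> *\<^sub>R a - (\<theta> - 1) *\<^sub>R b"
proof -
  have "\<theta> *\<^sub>R a = (\<theta> - 1) *\<^sub>R b + c"
    unfolding assms(2) using assms(1) by (simp add: scaleR_add_right algebra_simps)
  then show ?thesis by (simp add: algebra_simps)
qed

lemma convex_combination_sequence_invariant:
  fixes x y z :: "nat \<Rightarrow> 'a::real_vector" and \<theta> :: "nat \<Rightarrow> real"
  assumes "x 0 = y 0" "z 0 = y 0"
    and "\<And>k. \<theta> (Suc k) \<noteq> 0"
    and "\<And>k. x (Suc k) = (1 - 1 / \<theta> (Suc k)) *\<^sub>R y (Suc k) + (1 / \<theta> (Suc k)) *\<^sub>R z (Suc k)"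
  shows "z k = \<theta> k *\<^sub>R x k - (\<theta> k - 1) *\<^sub>R y k"
proof (cases k)
  case 0
  then show ?thesis using assms(1,2) by (simp add: algebra_simps)
next
  case (Suc m)
  then show ?thesis using assms(3,4) by (simp add: scaleR_eq_of_convex_combination)
qed

lemma convex_combination_step_eq_momentum_step:
  fixes x\<^sub>k y\<^sub>k z\<^sub>k x\<^sub>1 y\<^sub>1 z\<^sub>1 :: "'a::real_vector"
  assumes "\<theta>\<^sub>1 \<noteq> 0"
    and "z\<^sub>k = \<theta>\<^sub>k *\<^sub>R x\<^sub>k - (\<theta>\<^sub>k - 1) *\<^sub>R y\<^sub>k"
    and "z\<^sub>1 = z\<^sub>k + (s * \<theta>\<^sub>k) *\<^sub>R (y\<^sub>1 - x\<^sub>k)"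
    and "x\<^sub>1 = (1 - 1 / \<theta>\<^sub>1) *\<^sub>R y\<^sub>1 + (1 / \<theta>\<^sub>1) *\<^sub>R z\<^sub>1"
  shows "x\<^sub>1 = y\<^sub>1 + ((\<theta>\<^sub>k - 1) / \<theta>\<^sub>1) *\<^sub>R (y\<^sub>1 - y\<^sub>k) + ((s - 1) * \<theta>\<^sub>k / \<theta>\<^sub>1) *\<^sub>R (y\<^sub>1 - x\<^sub>k)"
proof -
  have "x\<^sub>1 = y\<^sub>1 + (1 / \<theta>\<^sub>1) *\<^sub>R (z\<^sub>1 - y\<^sub>1)"
    using assms(4) by (simp add: algebra_simps)
  also have "z\<^sub>1 - y\<^sub>1 = (\<theta>\<^sub>k - 1) *\<^sub>R (y\<^sub>1 - y\<^sub>k) + ((s - 1) * \<theta>\<^sub>k) *\<^sub>R (y\<^sub>1 - x\<^sub>k)"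
    unfolding assms(2,3) by (simp add: algebra_simps)
  finally show ?thesis
    by (simp add: scaleR_add_right divide_inverse algebra_simps)
qed

lemma two_step_recursion_unique:
  fixes T :: "'a \<Rightarrow> 'a" and F :: "nat \<Rightarrow> 'a \<Rightarrow> 'a \<Rightarrow> 'a \<Rightarrow> 'a"
  assumes "x 0 = x' 0" "y 0 = y' 0"
    and "\<And>k. y (Suc k) = T (x k)" "\<And>k. y' (Suc k) = T (x' k)"
    and "\<And>k. x (Suc k) = F k (x k) (y k) (y (Suc k))"
    and "\<And>k. x' (Suc k) = F k (x' k) (y' k) (y' (Suc k))"
  shows "x k = x' k \<and> y k = y' k"
proof (induction k)
  case 0
  then show ?case using assms(1,2) by simp
next
  case (Suc k)
  then have "y (Suc k) = y' (Suc k)" using assms(3,4) by simp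
  with Suc show ?case using assms(5,6) by simp
qed

theorem lemma6:
  fixes f :: "real ^ 'n \<Rightarrow> real" and gf :: "real ^ 'n \<Rightarrow> real ^ 'n"
    and L t :: real and \<theta> :: "nat \<Rightarrow> real" and x0 :: "real ^ 'n"
    and x y z x' y' :: "nat \<Rightarrow> real ^ 'n"
  assumes grad: "\<And>v. GDERIV f v :> gf v"
    and L: "L > 0" and t: "0 < t" "t \<le> 1"
    and \<theta>pos: "\<And>k. \<theta> k > 0"
    and I0: "y 0 = x0" "z 0 = x0" "x 0 = x0"
    and Iy: "\<And>k. y (Suc k) = x k - (1 / L) *\<^sub>R gf (x k)"
    and Iz: "\<And>k. z (Suc k) = z k - (2 * t * \<theta> k / L) *\<^sub>R gf (x k)"
    and Ix: "\<And>k. x (Suc k) = (1 - 1 / \<theta> (Suc k)) *\<^sub>R y (Suc k) + (1 / \<theta> (Suc k)) *\<^sub>R z (Suc k)"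
    and II0: "y' 0 = x0" "x' 0 = x0"
    and IIy: "\<And>k. y' (Suc k) = x' k - (1 / L) *\<^sub>R gf (x' k)"
    and IIx: "\<And>k. x' (Suc k) = y' (Suc k) + ((\<theta> k - 1) / \<theta> (Suc k)) *\<^sub>R (y' (Suc k) - y' k)
                 + ((2 * t - 1) * \<theta> k / \<theta> (Suc k)) *\<^sub>R (y' (Suc k) - x' k)"
  shows "\<forall>k. x k = x' k \<and> y k = y' k"
proof -
  have \<theta>_nonzero: "\<theta> k \<noteq> 0" for k
    using \<theta>pos[of k] by simp
  have z_eq: "z k = \<theta> k *\<^sub>R x k - (\<theta> k - 1) *\<^sub>R y k" for k
    using I0 \<theta>_nonzero Ix by (intro convex_combination_sequence_invariant) auto
  have z_momentum: "z (Suc k) = z k + ((2 * t) * \<theta> k) *\<^sub>R (y (Suc k) - x k)" for k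
    unfolding Iz Iy by simp
  have Ix_momentum: "x (Suc k) = y (Suc k) + ((\<theta> k - 1) / \<theta> (Suc k)) *\<^sub>R (y (Suc k) - y k)
                 + ((2 * t - 1) * \<theta> k / \<theta> (Suc k)) *\<^sub>R (y (Suc k) - x k)" for k
    using \<theta>_nonzero z_eq z_momentum Ix by (rule convex_combination_step_eq_momentum_step)
  show ?thesis
    using I0 II0 Iy IIy Ix_momentum IIx by (intro allI two_step_recursion_unique) auto
qed

end
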